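(* Let $d\ge1$ and $\beta>0$. There is a constant $c_1=c_1(d,\beta)>0$ such that, for all sufficiently small $\varepsilon\in(0,1)$ (depending only on $d,\beta$), with $K,N,M_i,r_i,A_i$ as in the context, $\mathbb{P}[A_i]\le c_1N^{-d}$ for all $i\in[1,K]_{\mathbb{Z}}$; consequently, with $A=\bigcup_{i=1}^K A_i$, $\mathbb{P}[A^c]\ge 1-c_1KN^{-d}$.
   Context: The $\beta$-LRP metric $D$ on $\mathbb{R}^d$ comes with a random set $\mathcal{E}$ of long edges $\langle\bm u,\bm v\rangle$, $\bm u,\bm v\in\mathbb{R}^d$, forming a Poisson point process with intensity $\beta|\bm u-\bm v|^{-2d}$: for disjoint Borel sets $U,W\subset\mathbb{R}^d$, the probability that there is at least one long edge with one endpoint in $U$ and the other in $W$ is $1-\exp\{-\int_U\int_W\beta|\bm u-\bm v|^{-2d}d\bm u\,d\bm v\}$, and edge configurations in disjoint regions of $\mathbb{R}^d\times\mathbb{R}^d$ are independent. $\theta\in(0,1)$ is the distance exponent of critical LRP (depending only on $d,\beta$). $B_r(\bm 0)$ is the Euclidean ball, $\mathbb{A}_{r,s}=B_r(\bm0)\setminus B_s(\bm 0)$, and $D(U,W;V)$ is the $D$-distance between $U,W$ for the metric restricted to $V$. Fix constants $c_{*,1},c_{*,2}>0$ depending only on $d,\beta$ with $\mathbb{P}[D(B_{1/2}(\bm0),\mathbb{A}_{1,7/8};B_1(\bm 0))\ge c_{*,1}]\ge c_{*,2}$. For $\varepsilon\in(0,1)$ set $K=\sqrt{\log(1/\varepsilon)}$,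 $N=(4^{-(1+1/\theta)}(c_{*,1}/\varepsilon)^{1/\theta})^{1/K}$, $M_1=(4\varepsilon/c_{*,1})^{1/\theta}$, $M_i=NM_{i-1}$ for $2\le i\le K$, $r_0=0$, $r_i=\sum_{k=1}^iM_k$. For $i\in[1,K]_{\mathbb{Z}}$, $A_i$ is the event that some long edge connects $B_{r_{i-1}}(\bm 0)$ and $B_{r_{i-1}+M_i/8}(\bm0)^c$. *)

theory Defs
  imports "HOL-Probability.Probability"
begin

definition lrp_intensity :: "real \<Rightarrow> ('a::euclidean_space) set \<Rightarrow> 'a set \<Rightarrow> ennreal" where
  "lrp_intensity \<beta> U W =
     (\<integral>\<^sup>+ u. \<integral>\<^sup>+ v. indicator U u * indicator W v *
          ennreal (\<beta> * norm (u - v) powr (- 2 * real DIM('a))) \<partial>lborel \<partial>lborel)"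

definition lrp_edge_prob :: "real \<Rightarrow> ('a::euclidean_space) set \<Rightarrow> 'a set \<Rightarrow> real" where
  "lrp_edge_prob \<beta> U W =
     (if lrp_intensity \<beta> U W = \<infinity> then 1 else 1 - exp (- enn2real (lrp_intensity \<beta> U W)))"

definition lrp_connect_event :: "'b measure \<Rightarrow> ('b \<Rightarrow> ('a \<times> 'a) set) \<Rightarrow> 'a set \<Rightarrow> 'a set \<Rightarrow> 'b set" where
  "lrp_connect_event M E U W =
     {\<omega> \<in> space M. \<exists>(u, v) \<in> E \<omega>. (u \<in> U \<and> v \<in> W) \<or> (v \<in> U \<and> u \<in> W)}"

text \<open>E is a random set of long edges of the beta-LRP: for disjoint Borel U, W the
  connection event is measurable with the Poisson probability.\<close>
definition lrp_edges :: "'b measure \<Rightarrow> real \<Rightarrow> ('b \<Rightarrow> ('a::euclidean_space \<times> 'a) set) \<Rightarrow> bool" where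
  "lrp_edges M \<beta> E \<longleftrightarrow>
     (\<forall>U W. U \<in> sets borel \<longrightarrow> W \<in> sets borel \<longrightarrow> U \<inter> W = {} \<longrightarrow>
        lrp_connect_event M E U W \<in> sets M \<and>
        measure M (lrp_connect_event M E U W) = lrp_edge_prob \<beta> U W)"

text \<open>Scale parameters (theta = distance exponent, cs = c_{*,1}).\<close>
definition scaleK :: "real \<Rightarrow> real" where
  "scaleK \<epsilon> = sqrt (ln (1 / \<epsilon>))"

definition scaleN :: "real \<Rightarrow> real \<Rightarrow> real \<Rightarrow> real" where
  "scaleN \<theta> cs \<epsilon> =
     (4 powr (- (1 + 1 / \<theta>)) * (cs / \<epsilon>) powr (1 / \<theta>)) powr (1 / scaleK \<epsilon>)"

definition scaleM :: "real \<Rightarrow> real \<Rightarrow> real \<Rightarrow> nat \<Rightarrow> real" where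
  "scaleM \<theta> cs \<epsilon> i = (4 * \<epsilon> / cs) powr (1 / \<theta>) * scaleN \<theta> cs \<epsilon> ^ (i - 1)"

definition scaler :: "real \<Rightarrow> real \<Rightarrow> real \<Rightarrow> nat \<Rightarrow> real" where
  "scaler \<theta> cs \<epsilon> i = (\<Sum>k = 1..i. scaleM \<theta> cs \<epsilon> k)"

definition eventA :: "'b measure \<Rightarrow> ('b \<Rightarrow> ('a::euclidean_space \<times> 'a) set) \<Rightarrow> real \<Rightarrow> real \<Rightarrow> real \<Rightarrow> nat \<Rightarrow> 'b set" where
  "eventA M E \<theta> cs \<epsilon> i =
     lrp_connect_event M E (ball 0 (scaler \<theta> cs \<epsilon> (i - 1)))
        (- ball 0 (scaler \<theta> cs \<epsilon> (i - 1) + scaleM \<theta> cs \<epsilon> i / 8))"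

end

theory Submission
  imports Defs
begin

text \<open>
  The event A_i asks for a long edge between the ball of radius r = r_(i-1) and the
  complement of the ball of radius r + s, where s = M_i / 8, so its probability is at most
  the Poisson intensity of such edges. For |u| < r and |v| >= r + s one has
  |u - v| >= s |v| / (r + s); hence the intensity is at most
  beta ((r + s) / s)^(2d) vol(B_r) times the integral of |v|^(-2d) over |v| >= r + s, and
  cutting that integral into dyadic shells bounds the intensity by 2 beta (8 r (r + s) / s^2)^d.
  Since the M_k grow geometrically with ratio N, r_(i-1) <= 2 M_i / N as soon as N >= 2, which
  makes the bound O(N^(-d)); for N < 2 the trivial bound 1 suffices. The union bound over
  the at most K events A_i gives the estimate for the complement of their union.
\<close>

lemma dyadic_shell:
  fixes R t :: real
  assumes "0 < R" "R \<le> t"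
  obtains k :: nat where "2 ^ k * R \<le> t" "t < 2 ^ Suc k * R"
proof -
  define k where "k = nat \<lfloor>log 2 (t / R)\<rfloor>"
  have "0 \<le> log 2 (t / R)" using assms by simp
  then have "\<lfloor>log 2 (t / R)\<rfloor> = int k" by (simp add: k_def)
  then have "2 powr real k \<le> t / R \<and> t / R < 2 powr (real k + 1)"
    using assms by (subst (asm) floor_log_eq_powr_iff) auto
  then show ?thesis
    using assms by (intro that[of k]) (auto simp: powr_realpow powr_add field_simps)
qed

lemma norm_diff_powr_le:
  fixes u v :: "'a::real_normed_vector"
  assumes "0 \<le> r" "0 < s" "0 \<le> p" "norm u < r" "r + s \<le> norm v"
  shows "norm (u - v) powr (- p) \<le> ((r + s) / s) powr p * norm v powr (- p)"
proof -
  have "norm v * s \<le> (norm v - r) * (r + s)"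
    using assms mult_left_mono[OF \<open>r + s \<le> norm v\<close> \<open>0 \<le> r\<close>] by (simp add: algebra_simps)
  moreover have "norm v - r \<le> norm (u - v)"
    using assms norm_triangle_ineq2[of v u] by (simp add: norm_minus_commute)
  ultimately have "norm v * (s / (r + s)) \<le> norm (u - v)"
    using assms mult_right_mono[of "norm v - r" "norm (u - v)" "r + s"] by (simp add: field_simps)
  moreover have "0 < norm v * (s / (r + s))"
    using assms by (intro mult_pos_pos divide_pos_pos) linarith+
  ultimately have "norm (u - v) powr (- p) \<le> (norm v * (s / (r + s))) powr (- p)"
    using assms by (intro powr_mono2') auto
  also have "\<dots> = ((r + s) / s) powr p * norm v powr (- p)"
    using assms by (simp add: powr_mult powr_minus_divide powr_divide)
  finally show ?thesis .
qed

lemma emeasure_ball_le_cube: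
  assumes "0 \<le> \<rho>"
  shows "emeasure lborel (ball (0::'a::euclidean_space) \<rho>) \<le> ennreal ((2 * \<rho>) ^ DIM('a))"
proof -
  have "ball (0::'a) \<rho> \<subseteq> cbox (- \<rho> *\<^sub>R One) (\<rho> *\<^sub>R One)"
  proof
    fix x :: 'a assume "x \<in> ball 0 \<rho>"
    then have "\<bar>x \<bullet> b\<bar> \<le> \<rho>" if "b \<in> Basis" for b
      using Basis_le_norm[OF that, of x] by simp
    then show "x \<in> cbox (- \<rho> *\<^sub>R One) (\<rho> *\<^sub>R One)"
      by (force simp: cbox_def abs_le_iff)
  qed
  then have "emeasure lborel (ball (0::'a) \<rho>) \<le> emeasure lborel (cbox (- \<rho> *\<^sub>R One) (\<rho> *\<^sub>R One) :: 'a set)"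
    by (rule emeasure_mono) simp
  also have "\<dots> = ennreal ((2 * \<rho>) ^ DIM('a))"
    using assms by (simp add: inner_add_left)
  finally show ?thesis .
qed

lemma dyadic_shell_bound:
  fixes R :: real and d k :: nat
  assumes "0 < R" "1 \<le> d"
  shows "(2 ^ k * R) powr (- 2 * real d) * (2 * (2 ^ Suc k * R)) ^ d \<le> 4 ^ d / R ^ d * (1 / 2) ^ k"
proof -
  define x where "x = 2 ^ k * R"
  have "0 < x" using assms by (simp add: x_def)
  then have "x powr (- 2 * real d) = 1 / x ^ (2 * d)"
    by (simp add: powr_minus_divide flip: powr_realpow)
  moreover have "x ^ (2 * d) = x ^ d * x ^ d"
    by (simp add: mult_2 power_add)
  ultimately have "x powr (- 2 * real d) * (4 * x) ^ d = 4 ^ d / x ^ d"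
    using \<open>0 < x\<close> by (simp add: power_mult_distrib)
  also have "\<dots> = 4 ^ d / R ^ d / (2 ^ d) ^ k"
    by (simp add: x_def power_mult_distrib flip: power_mult)
  also have "\<dots> \<le> 4 ^ d / R ^ d / 2 ^ k"
    using assms power_increasing[of 1 d "2::real"]
    by (intro divide_left_mono power_mono) auto
  also have "\<dots> = 4 ^ d / R ^ d * (1 / 2) ^ k"
    by (simp add: power_one_over)
  finally show ?thesis by (simp add: x_def)
qed

lemma indicator_outside_ball_le_dyadic_shells:
  fixes R p :: real
  assumes "0 < R" "0 \<le> p"
  shows "indicator (- ball (0::'a::real_normed_vector) R) v * ennreal (norm v powr (- p))
           \<le> (\<Sum>k. indicator (ball 0 (2 ^ Suc k * R)) v * ennreal ((2 ^ k * R) powr (- p)))"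
proof -
  define shell where "shell k = indicator (ball 0 (2 ^ Suc k * R)) v * ennreal ((2 ^ k * R) powr (- p))"
    for k
  have "indicator (- ball (0::'a) R) v * ennreal (norm v powr (- p)) \<le> (\<Sum>k. shell k)"
  proof (cases "R \<le> norm v")
    case True
    then obtain k where k: "2 ^ k * R \<le> norm v" "norm v < 2 ^ Suc k * R"
      using dyadic_shell[OF assms(1)] by blast
    then have "norm v powr (- p) \<le> (2 ^ k * R) powr (- p)"
      using assms by (intro powr_mono2') auto
    then have "indicator (- ball (0::'a) R) v * ennreal (norm v powr (- p)) \<le> shell k"
      using k by (auto simp: shell_def indicator_def intro: ennreal_leI)
    also have "\<dots> \<le> (\<Sum>k. shell k)"
      using sum_le_suminf[OF summableI, of "{k}" shell] by simp
    finally show ?thesis .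
  next
    case False
    then show ?thesis by (simp add: indicator_def)
  qed
  then show ?thesis by (simp only: shell_def)
qed

lemma nn_integral_norm_powr_outside_ball_le:
  fixes R :: real
  assumes "0 < R"
  shows "(\<integral>\<^sup>+ v. indicator (- ball (0::'a::euclidean_space) R) v
             * ennreal (norm v powr (- 2 * real DIM('a))) \<partial>lborel)
         \<le> ennreal (2 * 4 ^ DIM('a) / R ^ DIM('a))"
proof -
  define d where "d = DIM('a)"
  define shell where
    "shell k v = indicator (ball (0::'a) (2 ^ Suc k * R)) v * ennreal ((2 ^ k * R) powr (- 2 * real d))"
    for k v
  have "(\<integral>\<^sup>+ v. indicator (- ball (0::'a) R) v * ennreal (norm v powr (- 2 * real d)) \<partial>lborel)
      \<le> (\<integral>\<^sup>+ v. (\<Sum>k. shell k v) \<partial>lborel)"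
    using indicator_outside_ball_le_dyadic_shells[OF assms, of "2 * real d"]
    by (intro nn_integral_mono) (simp add: shell_def)
  also have "\<dots> = (\<Sum>k. integral\<^sup>N lborel (shell k))"
    by (intro nn_integral_suminf) (unfold shell_def, measurable, auto simp: pred_def)
  also have "\<dots> \<le> (\<Sum>k. ennreal (4 ^ d / R ^ d * (1 / 2) ^ k))"
  proof (intro suminf_le allI)
    fix k
    have "integral\<^sup>N lborel (shell k)
        = ennreal ((2 ^ k * R) powr (- 2 * real d)) * emeasure lborel (ball (0::'a) (2 ^ Suc k * R))"
      unfolding shell_def by (subst mult.commute) (simp add: nn_integral_cmult_indicator)
    also have "\<dots> \<le> ennreal ((2 ^ k * R) powr (- 2 * real d)) * ennreal ((2 * (2 ^ Suc k * R)) ^ d)"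
      unfolding d_def using assms by (intro mult_left_mono emeasure_ball_le_cube) auto
    also have "\<dots> \<le> ennreal (4 ^ d / R ^ d * (1 / 2) ^ k)"
      using assms dyadic_shell_bound[of R d k]
      by (auto simp: d_def DIM_positive Suc_le_eq simp flip: ennreal_mult intro: ennreal_leI)
    finally show "integral\<^sup>N lborel (shell k) \<le> ennreal (4 ^ d / R ^ d * (1 / 2) ^ k)" .
  qed auto
  also have "\<dots> = ennreal (2 * 4 ^ d / R ^ d)"
    using assms sums_mult[OF geometric_sums[of "1 / 2 :: real"], of "4 ^ d / R ^ d"]
    by (intro suminf_ennreal_eq) (auto simp: ac_simps)
  finally show ?thesis by (simp add: d_def)
qed

lemma intensity_factors_eq:
  fixes r s \<beta> :: real and d :: nat
  assumes "0 \<le> r" "0 < s"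
  shows "\<beta> * ((r + s) / s) powr (2 * real d) * (2 * 4 ^ d / (r + s) ^ d) * (2 * r) ^ d
           = 2 * \<beta> * (8 * r * (r + s) / s\<^sup>2) ^ d"
proof -
  have "((r + s) / s) powr (2 * real d) = ((r + s) / s) ^ (2 * d)"
    using assms by (subst powr_realpow[symmetric]) auto
  then have "((r + s) / s) powr (2 * real d) = ((r + s)\<^sup>2 / s\<^sup>2) ^ d"
    by (simp add: power_mult power_divide)
  moreover have "(8::real) ^ d = 4 ^ d * 2 ^ d"
    by (simp flip: power_mult_distrib)
  ultimately have "\<beta> * ((r + s) / s) powr (2 * real d) * (2 * 4 ^ d / (r + s) ^ d) * (2 * r) ^ d
      = 2 * \<beta> * ((r + s)\<^sup>2 / s\<^sup>2 * (4 / (r + s)) * (2 * r)) ^ d"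
    using assms by (simp add: power_mult_distrib power_divide)
  also have "(r + s)\<^sup>2 / s\<^sup>2 * (4 / (r + s)) * (2 * r) = 8 * r * (r + s) / s\<^sup>2"
    using assms by (simp add: power2_eq_square field_simps add_nonneg_pos [THEN less_imp_neq, symmetric])
  finally show ?thesis .
qed

lemma nn_integral_kernel_outside_ball_le:
  fixes r s \<beta> :: real and u :: "'a::euclidean_space"
  assumes "0 \<le> \<beta>" "0 \<le> r" "0 < s" "norm u < r"
  shows "(\<integral>\<^sup>+ v. indicator (- ball 0 (r + s)) v * ennreal (\<beta> * norm (u - v) powr (- 2 * real DIM('a))) \<partial>lborel)
           \<le> ennreal (\<beta> * ((r + s) / s) powr (2 * real DIM('a)) * (2 * 4 ^ DIM('a) / (r + s) ^ DIM('a)))"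
proof -
  define d where "d = DIM('a)"
  define W where "W = - ball (0::'a) (r + s)"
  define C where "C = \<beta> * ((r + s) / s) powr (2 * real d)"
  have "0 \<le> C" using assms by (simp add: C_def)
  have pointwise: "indicator W v * ennreal (\<beta> * norm (u - v) powr (- 2 * real d))
      \<le> ennreal C * (indicator W v * ennreal (norm v powr (- 2 * real d)))" for v
  proof (cases "v \<in> W")
    case True
    then have "\<beta> * norm (u - v) powr (- 2 * real d) \<le> C * norm v powr (- 2 * real d)"
      using assms norm_diff_powr_le[of r s "2 * real d" u v]
      by (auto simp: C_def W_def mult.assoc intro: mult_left_mono)
    then show ?thesis
      using True \<open>0 \<le> C\<close> by (simp add: ennreal_leI flip: ennreal_mult)
  qed simp
  have "(\<integral>\<^sup>+ v. indicator W v * ennreal (\<beta> * norm (u - v) powr (- 2 * real d)) \<partial>lborel)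
      \<le> (\<integral>\<^sup>+ v. ennreal C * (indicator W v * ennreal (norm v powr (- 2 * real d))) \<partial>lborel)"
    by (intro nn_integral_mono pointwise)
  also have "\<dots> = ennreal C * (\<integral>\<^sup>+ v. indicator W v * ennreal (norm v powr (- 2 * real d)) \<partial>lborel)"
    by (rule nn_integral_cmult) (unfold W_def, measurable, auto simp: pred_def)
  also have "\<dots> \<le> ennreal C * ennreal (2 * 4 ^ d / (r + s) ^ d)"
    unfolding W_def d_def using assms
    by (intro mult_left_mono nn_integral_norm_powr_outside_ball_le) auto
  also have "\<dots> = ennreal (C * (2 * 4 ^ d / (r + s) ^ d))"
    by (rule ennreal_mult[symmetric]) (use \<open>0 \<le> C\<close> assms in auto)
  finally show ?thesis by (simp add: W_def C_def d_def)
qed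

lemma lrp_intensity_ball_outside_ball_le:
  fixes r s \<beta> :: real
  assumes "0 \<le> \<beta>" "0 \<le> r" "0 < s"
  shows "lrp_intensity \<beta> (ball (0::'a::euclidean_space) r) (- ball 0 (r + s))
           \<le> ennreal (2 * \<beta> * (8 * r * (r + s) / s\<^sup>2) ^ DIM('a))"
proof -
  define d where "d = DIM('a)"
  define U where "U = ball (0::'a) r"
  define K where "K = \<beta> * ((r + s) / s) powr (2 * real d) * (2 * 4 ^ d / (r + s) ^ d)"
  have "0 \<le> K" using assms by (simp add: K_def)
  have inner: "(\<integral>\<^sup>+ v. indicator U u * indicator (- ball 0 (r + s)) v
                      * ennreal (\<beta> * norm (u - v) powr (- 2 * real d)) \<partial>lborel)
      \<le> ennreal K * indicator U u" for u
    using nn_integral_kernel_outside_ball_le[OF assms, of u]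
    by (cases "u \<in> U") (simp_all add: U_def K_def d_def mult.assoc)
  have "lrp_intensity \<beta> U (- ball 0 (r + s)) \<le> (\<integral>\<^sup>+ u. ennreal K * indicator U u \<partial>lborel)"
    unfolding lrp_intensity_def d_def[symmetric] by (intro nn_integral_mono inner)
  also have "\<dots> = ennreal K * emeasure lborel U"
    by (simp add: U_def nn_integral_cmult_indicator)
  also have "\<dots> \<le> ennreal K * ennreal ((2 * r) ^ d)"
    unfolding U_def d_def using assms by (intro mult_left_mono emeasure_ball_le_cube) auto
  also have "\<dots> = ennreal (K * (2 * r) ^ d)"
    using \<open>0 \<le> K\<close> assms by (simp add: ennreal_mult)
  also have "K * (2 * r) ^ d = 2 * \<beta> * (8 * r * (r + s) / s\<^sup>2) ^ d"
    unfolding K_def by (rule intensity_factors_eq[OF assms(2,3)])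
  finally show ?thesis by (simp add: U_def d_def)
qed

lemma lrp_edge_prob_le:
  assumes "lrp_intensity \<beta> U W \<le> ennreal B" "0 \<le> B"
  shows "lrp_edge_prob \<beta> U W \<le> B"
proof -
  define x where "x = enn2real (lrp_intensity \<beta> U W)"
  have "lrp_intensity \<beta> U W \<noteq> \<infinity>"
    using assms(1) by (metis ennreal_neq_top infinity_ennreal_def neq_top_trans)
  moreover have "x \<le> B"
    using assms by (simp add: x_def enn2real_leI)
  moreover have "1 - exp (- x) \<le> x"
    using exp_ge_add_one_self[of "- x"] by simp
  ultimately show ?thesis
    by (simp add: lrp_edge_prob_def x_def)
qed

lemma lrp_connect_ball_outside_ball:
  fixes r s \<beta> :: real and E :: "'b \<Rightarrow> ('a::euclidean_space \<times> 'a) set"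
  assumes "lrp_edges M \<beta> E" "0 \<le> \<beta>" "0 \<le> r" "0 < s"
  shows "lrp_connect_event M E (ball 0 r) (- ball 0 (r + s)) \<in> sets M"
    and "measure M (lrp_connect_event M E (ball 0 r) (- ball 0 (r + s)))
           \<le> 2 * \<beta> * (8 * r * (r + s) / s\<^sup>2) ^ DIM('a)"
proof -
  have "ball (0::'a) r \<inter> - ball 0 (r + s) = {}" using assms by auto
  then have "lrp_connect_event M E (ball 0 r) (- ball 0 (r + s)) \<in> sets M"
    and prob: "measure M (lrp_connect_event M E (ball 0 r) (- ball 0 (r + s)))
                 = lrp_edge_prob \<beta> (ball (0::'a) r) (- ball 0 (r + s))"
    using assms(1) unfolding lrp_edges_def by auto
  then show "lrp_connect_event M E (ball 0 r) (- ball 0 (r + s)) \<in> sets M" by simp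
  show "measure M (lrp_connect_event M E (ball 0 r) (- ball 0 (r + s)))
           \<le> 2 * \<beta> * (8 * r * (r + s) / s\<^sup>2) ^ DIM('a)"
    unfolding prob using assms lrp_intensity_ball_outside_ball_le[of \<beta> r s]
    by (intro lrp_edge_prob_le) auto
qed

lemma scaleN_pos: "0 < \<epsilon> \<Longrightarrow> 0 < cs \<Longrightarrow> 0 < scaleN \<theta> cs \<epsilon>"
  by (simp add: scaleN_def)

lemma scaleM_pos: "0 < \<epsilon> \<Longrightarrow> 0 < cs \<Longrightarrow> 0 < scaleM \<theta> cs \<epsilon> i"
  by (simp add: scaleM_def scaleN_pos)

lemma scaleM_Suc: "1 \<le> i \<Longrightarrow> scaleM \<theta> cs \<epsilon> (Suc i) = scaleM \<theta> cs \<epsilon> i * scaleN \<theta> cs \<epsilon>"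
  by (cases i) (simp_all add: scaleM_def power_Suc2)

lemma scaler_mult_scaleN_le:
  assumes "0 < \<epsilon>" "0 < cs" "2 \<le> scaleN \<theta> cs \<epsilon>"
  shows "scaler \<theta> cs \<epsilon> n * scaleN \<theta> cs \<epsilon> \<le> 2 * scaleM \<theta> cs \<epsilon> (Suc n)"
proof (induction n)
  case 0
  then show ?case using scaleM_pos[OF assms(1,2)] by (simp add: scaler_def less_imp_le)
next
  case (Suc n)
  let ?N = "scaleN \<theta> cs \<epsilon>" and ?m = "scaleM \<theta> cs \<epsilon> (Suc n)"
  have "scaler \<theta> cs \<epsilon> (Suc n) * ?N = scaler \<theta> cs \<epsilon> n * ?N + ?m * ?N"
    by (simp add: scaler_def algebra_simps)
  also have "\<dots> \<le> ?m * ?N + ?m * ?N"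
    using Suc.IH mult_left_mono[OF assms(3), of ?m] scaleM_pos[OF assms(1,2), of \<theta> "Suc n"]
    by linarith
  also have "\<dots> = 2 * scaleM \<theta> cs \<epsilon> (Suc (Suc n))"
    by (simp add: scaleM_Suc)
  finally show ?case .
qed

lemma intensity_ratio_le:
  fixes r m N :: real
  assumes "0 \<le> r" "0 < m" "2 \<le> N" "r * N \<le> 2 * m"
  shows "8 * r * (r + m / 8) / (m / 8)\<^sup>2 \<le> 1152 / N"
proof -
  have "r \<le> m"
    using mult_left_mono[OF assms(3,1)] assms(4) by linarith
  have "8 * r * (r + m / 8) / (m / 8)\<^sup>2 = 512 * r * (r + m / 8) / m\<^sup>2"
    by (simp add: power_divide)
  also have "\<dots> \<le> 512 * r * (9 * m / 8) / m\<^sup>2"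
    using assms \<open>r \<le> m\<close> by (intro divide_right_mono mult_left_mono) auto
  also have "\<dots> = 576 * r / m"
    using assms by (simp add: power2_eq_square)
  also have "\<dots> \<le> 1152 / N"
    using assms by (simp add: field_simps)
  finally show ?thesis .
qed

lemma measure_eventA_le:
  fixes \<beta> \<theta> cs \<epsilon> :: real and E :: "'b \<Rightarrow> ('a::euclidean_space \<times> 'a) set"
  assumes "prob_space M" "lrp_edges M \<beta> E" "0 \<le> \<beta>" "0 < cs" "0 < \<epsilon>" "1 \<le> i"
  shows "eventA M E \<theta> cs \<epsilon> i \<in> sets M"
    and "measure M (eventA M E \<theta> cs \<epsilon> i)
           \<le> (2 * \<beta> * 1152 ^ DIM('a) + 2 ^ DIM('a)) * scaleN \<theta> cs \<epsilon> powr (- real DIM('a))"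
proof -
  obtain n where i: "i = Suc n" using assms(6) by (cases i) auto
  define d where "d = DIM('a)"
  define N where "N = scaleN \<theta> cs \<epsilon>"
  define r where "r = scaler \<theta> cs \<epsilon> n"
  define m where "m = scaleM \<theta> cs \<epsilon> i"
  have "0 < N" "0 < m" using assms by (simp_all add: N_def m_def scaleN_pos scaleM_pos)
  have "0 \<le> r" using assms by (simp add: r_def scaler_def sum_nonneg scaleM_pos less_imp_le)
  have event: "eventA M E \<theta> cs \<epsilon> i = lrp_connect_event M E (ball 0 r) (- ball 0 (r + m / 8))"
    by (simp add: eventA_def i r_def m_def)
  have connect: "measure M (eventA M E \<theta> cs \<epsilon> i) \<le> 2 * \<beta> * (8 * r * (r + m / 8) / (m / 8)\<^sup>2) ^ d"
    unfolding event d_def using assms \<open>0 \<le> r\<close> \<open>0 < m\<close> by (intro lrp_connect_ball_outside_ball(2)) auto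
  show "eventA M E \<theta> cs \<epsilon> i \<in> sets M"
    unfolding event using assms \<open>0 \<le> r\<close> \<open>0 < m\<close> by (intro lrp_connect_ball_outside_ball(1)) auto
  have "measure M (eventA M E \<theta> cs \<epsilon> i) \<le> (2 * \<beta> * 1152 ^ d + 2 ^ d) / N ^ d"
  proof (cases "2 \<le> N")
    case True
    then have rN: "r * N \<le> 2 * m"
      using scaler_mult_scaleN_le[of \<epsilon> cs \<theta> n] assms by (simp add: N_def r_def m_def i)
    have "8 * r * (r + m / 8) / (m / 8)\<^sup>2 \<le> 1152 / N"
      by (rule intensity_ratio_le[OF \<open>0 \<le> r\<close> \<open>0 < m\<close> True rN])
    then have ratio: "(8 * r * (r + m / 8) / (m / 8)\<^sup>2) ^ d \<le> 1152 ^ d / N ^ d"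
      using \<open>0 \<le> r\<close> \<open>0 < m\<close> by (simp add: power_mono flip: power_divide)
    have "2 * \<beta> * (8 * r * (r + m / 8) / (m / 8)\<^sup>2) ^ d \<le> 2 * \<beta> * 1152 ^ d / N ^ d"
      using mult_left_mono[OF ratio, of "2 * \<beta>"] assms(3) by simp
    also have "\<dots> \<le> (2 * \<beta> * 1152 ^ d + 2 ^ d) / N ^ d"
      using \<open>0 < N\<close> by (simp add: divide_right_mono)
    finally show ?thesis using connect by linarith
  next
    case False
    have "measure M (eventA M E \<theta> cs \<epsilon> i) \<le> 2 ^ d / 2 ^ d"
      using prob_space.prob_le_1[OF assms(1)] by simp
    also have "\<dots> \<le> 2 ^ d / N ^ d"
      using False \<open>0 < N\<close> by (intro divide_left_mono power_mono) auto
    also have "\<dots> \<le> (2 * \<beta> * 1152 ^ d + 2 ^ d) / N ^ d"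
      using assms(3) \<open>0 < N\<close> by (simp add: divide_right_mono)
    finally show ?thesis .
  qed
  then show "measure M (eventA M E \<theta> cs \<epsilon> i)
      \<le> (2 * \<beta> * 1152 ^ DIM('a) + 2 ^ DIM('a)) * scaleN \<theta> cs \<epsilon> powr (- real DIM('a))"
    using \<open>0 < N\<close> by (simp add: N_def d_def powr_minus_divide powr_realpow)
qed

lemma (in prob_space) prob_compl_UNION_ge:
  assumes "finite I" "\<And>i. i \<in> I \<Longrightarrow> A i \<in> events" "\<And>i. i \<in> I \<Longrightarrow> prob (A i) \<le> q"
  shows "1 - real (card I) * q \<le> prob (space M - (\<Union>i\<in>I. A i))"
proof -
  have "prob (\<Union>i\<in>I. A i) \<le> (\<Sum>i\<in>I. prob (A i))"
    using assms by (intro finite_measure_subadditive_finite) auto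
  also have "\<dots> \<le> real (card I) * q"
    using assms sum_bounded_above[of I "\<lambda>i. prob (A i)" q] by simp
  finally show ?thesis
    using assms by (subst prob_compl) auto
qed

lemma scaleK_nonneg: "0 < \<epsilon> \<Longrightarrow> \<epsilon> \<le> 1 \<Longrightarrow> 0 \<le> scaleK \<epsilon>"
  by (simp add: scaleK_def)

lemma prob_no_eventA_ge:
  fixes \<beta> \<theta> cs \<epsilon> :: real and E :: "'b \<Rightarrow> ('a::euclidean_space \<times> 'a) set"
  assumes "prob_space M" "lrp_edges M \<beta> E" "0 \<le> \<beta>" "0 < cs" "0 < \<epsilon>" "\<epsilon> \<le> 1"
  shows "1 - (2 * \<beta> * 1152 ^ DIM('a) + 2 ^ DIM('a)) * scaleK \<epsilon> * scaleN \<theta> cs \<epsilon> powr (- real DIM('a))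
           \<le> measure M (space M - (\<Union>i \<in> {1..nat \<lfloor>scaleK \<epsilon>\<rfloor>}. eventA M E \<theta> cs \<epsilon> i))"
proof -
  interpret prob_space M by fact
  define I where "I = {1..nat \<lfloor>scaleK \<epsilon>\<rfloor>}"
  define q where "q = (2 * \<beta> * 1152 ^ DIM('a) + 2 ^ DIM('a)) * scaleN \<theta> cs \<epsilon> powr (- real DIM('a))"
  have "0 \<le> q" using assms(3) by (simp add: q_def)
  have "real (card I) \<le> scaleK \<epsilon>"
    using scaleK_nonneg[OF assms(5,6)] by (simp add: I_def)
  then have "1 - scaleK \<epsilon> * q \<le> 1 - real (card I) * q"
    using \<open>0 \<le> q\<close> by (simp add: mult_right_mono)
  also have "\<dots> \<le> prob (space M - (\<Union>i\<in>I. eventA M E \<theta> cs \<epsilon> i))"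
    using measure_eventA_le[OF assms(1-5)] by (intro prob_compl_UNION_ge) (auto simp: I_def q_def)
  finally show ?thesis by (simp add: I_def q_def ac_simps)
qed

theorem lemma3p2:
  fixes \<beta> \<theta> cs :: real
  assumes "\<beta> > 0" and "0 < \<theta>" and "\<theta> < 1" and "cs > 0"
  shows "\<exists>c1 > 0. \<exists>\<epsilon>0 > 0. \<forall>\<epsilon>. 0 < \<epsilon> \<and> \<epsilon> < 1 \<and> \<epsilon> < \<epsilon>0 \<longrightarrow>
           (\<forall>(M :: 'b measure) (E :: 'b \<Rightarrow> ('a::euclidean_space \<times> 'a) set).
              prob_space M \<and> lrp_edges M \<beta> E \<longrightarrow>
                (\<forall>i \<in> {1..nat \<lfloor>scaleK \<epsilon>\<rfloor>}.
                   measure M (eventA M E \<theta> cs \<epsilon> i)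
                     \<le> c1 * scaleN \<theta> cs \<epsilon> powr (- real DIM('a))) \<and>
                measure M (space M - (\<Union>i \<in> {1..nat \<lfloor>scaleK \<epsilon>\<rfloor>}. eventA M E \<theta> cs \<epsilon> i))
                  \<ge> 1 - c1 * scaleK \<epsilon> * scaleN \<theta> cs \<epsilon> powr (- real DIM('a)))"
proof -
  define c1 where "c1 = 2 * \<beta> * 1152 ^ DIM('a) + 2 ^ DIM('a)"
  have "0 < c1" using assms(1) by (simp add: c1_def add_nonneg_pos)
  moreover have
    "(\<forall>i \<in> {1..nat \<lfloor>scaleK \<epsilon>\<rfloor>}.
        measure M (eventA M E \<theta> cs \<epsilon> i) \<le> c1 * scaleN \<theta> cs \<epsilon> powr (- real DIM('a))) \<and>
     1 - c1 * scaleK \<epsilon> * scaleN \<theta> cs \<epsilon> powr (- real DIM('a))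
       \<le> measure M (space M - (\<Union>i \<in> {1..nat \<lfloor>scaleK \<epsilon>\<rfloor>}. eventA M E \<theta> cs \<epsilon> i))"
    if "0 < \<epsilon>" "\<epsilon> < 1" "prob_space M" "lrp_edges M \<beta> E"
    for \<epsilon> :: real and M :: "'b measure" and E :: "'b \<Rightarrow> ('a \<times> 'a) set"
    using that assms measure_eventA_le(2)[of M \<beta> E cs \<epsilon> _ \<theta>] prob_no_eventA_ge[of M \<beta> E cs \<epsilon> \<theta>]
    by (simp add: c1_def)
  ultimately show ?thesis
    by (intro exI[of _ c1] conjI exI[of _ "1::real"]) auto
qed

end
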